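(* For every integer $n\ge1$, $$J\mathcal{G}_{n+1}^{(3)}J\mathcal{G}_{n-1}^{(3)}-\left[J\mathcal{G}_{n}^{(3)}\right]^{2}=\frac{1}{49}\left[2^{n}\left(2\Theta Y_{n-1}(1)-Y_{n}(1)\Theta\right)-\left(\Xi+14\Omega\right)\right]$$ and $$K\mathcal{G}_{n+1}^{(3)}K\mathcal{G}_{n-1}^{(3)}-\left[K\mathcal{G}_{n}^{(3)}\right]^{2}=2^{n-1}\left[2\Theta Y^{*}_{n-1}(1)-Y^{*}_{n}(1)\Theta\right]-\left[\Xi^{*}+6\Omega\right],$$ where $Y_{m}(1)=X_{m}(2\mathbf{A}-\mathbf{B})-X_{m+1}(3\mathbf{B}+\mathbf{A})$, $Y^{*}_{m}(1)=X_{m}(2\mathbf{C}-\mathbf{D})-X_{m+1}(3\mathbf{D}+\mathbf{C})$, $\Xi=\mathbf{A}^2+\mathbf{A}\mathbf{B}+\mathbf{B}^2$ and $\Xi^{*}=\mathbf{C}^2+\mathbf{C}\mathbf{D}+\mathbf{D}^2$.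
   Context: Fix real numbers $\lambda_1,\lambda_2,\lambda_3$. The algebra $\mathbb{H}_{\lambda_1,\lambda_2,\lambda_3}$ of 3-parameter generalized quaternions is the real associative algebra of elements $\psi_0+\psi_1\mathbf{e}_1+\psi_2\mathbf{e}_2+\psi_3\mathbf{e}_3$ ($\psi_i\in\mathbb{R}$) with $\mathbf{e}_1^2=-\lambda_1\lambda_2$, $\mathbf{e}_2^2=-\lambda_1\lambda_3$, $\mathbf{e}_3^2=-\lambda_2\lambda_3$, $\mathbf{e}_1\mathbf{e}_2=-\mathbf{e}_2\mathbf{e}_1=\lambda_1\mathbf{e}_3$, $\mathbf{e}_1\mathbf{e}_3=-\mathbf{e}_3\mathbf{e}_1=-\lambda_2\mathbf{e}_2$, $\mathbf{e}_2\mathbf{e}_3=-\mathbf{e}_3\mathbf{e}_2=\lambda_3\mathbf{e}_1$. The third-order Jacobsthal numbers are $J_0^{(3)}=0$, $J_1^{(3)}=J_2^{(3)}=1$, $J_n^{(3)}=J_{n-1}^{(3)}+J_{n-2}^{(3)}+2J_{n-3}^{(3)}$ for $n\ge3$; the modified third-order Jacobsthal numbers are $K_0^{(3)}=3$, $K_1^{(3)}=1$, $K_2^{(3)}=3$, $K_n^{(3)}=K_{n-1}^{(3)}+K_{n-2}^{(3)}+2K_{n-3}^{(3)}$ for $n\ge3$. For $n\ge0$ define $J\mathcal{G}_n^{(3)}=J_n^{(3)}+J_{n+1}^{(3)}\mathbf{e}_1+J_{n+2}^{(3)}\mathbf{e}_2+J_{n+3}^{(3)}\mathbf{e}_3$ and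 $K\mathcal{G}_n^{(3)}=K_n^{(3)}+K_{n+1}^{(3)}\mathbf{e}_1+K_{n+2}^{(3)}\mathbf{e}_2+K_{n+3}^{(3)}\mathbf{e}_3$. Here $X_n=0,1,-1$ according as $n\equiv0,1,2\pmod 3$, $\Theta=1+2\mathbf{e}_1+4\mathbf{e}_2+8\mathbf{e}_3$, $\mathbf{A}=1+2\mathbf{e}_1-3\mathbf{e}_2+\mathbf{e}_3$, $\mathbf{B}=2-3\mathbf{e}_1+\mathbf{e}_2+2\mathbf{e}_3$, $\mathbf{C}=1-2\mathbf{e}_1+\mathbf{e}_2+\mathbf{e}_3$, $\mathbf{D}=-2+\mathbf{e}_1+\mathbf{e}_2-2\mathbf{e}_3$, and $\Omega=\lambda_3\mathbf{e}_1+\lambda_2\mathbf{e}_2+\lambda_1\mathbf{e}_3$. *)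

theory Defs
  imports Complex_Main
begin

text \<open>Elements psi0 + psi1 e1 + psi2 e2 + psi3 e3 of the 3-parameter generalized quaternions.\<close>
datatype gq = GQ real real real real

fun gq_add :: "gq \<Rightarrow> gq \<Rightarrow> gq" where
  "gq_add (GQ a0 a1 a2 a3) (GQ b0 b1 b2 b3) = GQ (a0+b0) (a1+b1) (a2+b2) (a3+b3)"

fun gq_scale :: "real \<Rightarrow> gq \<Rightarrow> gq" where
  "gq_scale c (GQ a0 a1 a2 a3) = GQ (c*a0) (c*a1) (c*a2) (c*a3)"

definition gq_sub :: "gq \<Rightarrow> gq \<Rightarrow> gq" where
  "gq_sub a b = gq_add a (gq_scale (-1) b)"

text \<open>Multiplication in H_{l1,l2,l3}, obtained by bilinear extension of the rules
  e1^2 = -l1 l2, e2^2 = -l1 l3, e3^2 = -l2 l3, e1 e2 = -e2 e1 = l1 e3,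
  e1 e3 = -e3 e1 = -l2 e2, e2 e3 = -e3 e2 = l3 e1.\<close>
fun gq_mult :: "real \<Rightarrow> real \<Rightarrow> real \<Rightarrow> gq \<Rightarrow> gq \<Rightarrow> gq" where
  "gq_mult l1 l2 l3 (GQ a0 a1 a2 a3) (GQ b0 b1 b2 b3) =
     GQ (a0*b0 - l1*l2*a1*b1 - l1*l3*a2*b2 - l2*l3*a3*b3)
        (a0*b1 + a1*b0 + l3*(a2*b3 - a3*b2))
        (a0*b2 + a2*b0 - l2*(a1*b3 - a3*b1))
        (a0*b3 + a3*b0 + l1*(a1*b2 - a2*b1))"

fun J3 :: "nat \<Rightarrow> int" where
  "J3 0 = 0" | "J3 (Suc 0) = 1" | "J3 (Suc (Suc 0)) = 1"
| "J3 (Suc (Suc (Suc n))) = J3 (Suc (Suc n)) + J3 (Suc n) + 2 * J3 n"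

fun K3 :: "nat \<Rightarrow> int" where
  "K3 0 = 3" | "K3 (Suc 0) = 1" | "K3 (Suc (Suc 0)) = 3"
| "K3 (Suc (Suc (Suc n))) = K3 (Suc (Suc n)) + K3 (Suc n) + 2 * K3 n"

definition JG :: "nat \<Rightarrow> gq" where
  "JG n = GQ (of_int (J3 n)) (of_int (J3 (n+1))) (of_int (J3 (n+2))) (of_int (J3 (n+3)))"

definition KG :: "nat \<Rightarrow> gq" where
  "KG n = GQ (of_int (K3 n)) (of_int (K3 (n+1))) (of_int (K3 (n+2))) (of_int (K3 (n+3)))"

definition Xs :: "nat \<Rightarrow> real" where
  "Xs n = (if n mod 3 = 0 then 0 else if n mod 3 = 1 then 1 else -1)"

definition Theta :: gq where "Theta = GQ 1 2 4 8"
definition gqA :: gq where "gqA = GQ 1 2 (-3) 1"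
definition gqB :: gq where "gqB = GQ 2 (-3) 1 2"
definition gqC :: gq where "gqC = GQ 1 (-2) 1 1"
definition gqD :: gq where "gqD = GQ (-2) 1 1 (-2)"
definition Omega :: "real \<Rightarrow> real \<Rightarrow> real \<Rightarrow> gq" where
  "Omega l1 l2 l3 = GQ 0 l3 l2 l1"

definition Y1 :: "nat \<Rightarrow> gq" where
  "Y1 m = gq_sub (gq_scale (Xs m) (gq_sub (gq_scale 2 gqA) gqB))
                 (gq_scale (Xs (m+1)) (gq_add (gq_scale 3 gqB) gqA))"

definition Y1s :: "nat \<Rightarrow> gq" where
  "Y1s m = gq_sub (gq_scale (Xs m) (gq_sub (gq_scale 2 gqC) gqD))
                  (gq_scale (Xs (m+1)) (gq_add (gq_scale 3 gqD) gqC))"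

definition Xi :: "real \<Rightarrow> real \<Rightarrow> real \<Rightarrow> gq" where
  "Xi l1 l2 l3 = gq_add (gq_add (gq_mult l1 l2 l3 gqA gqA) (gq_mult l1 l2 l3 gqA gqB))
                        (gq_mult l1 l2 l3 gqB gqB)"

definition Xis :: "real \<Rightarrow> real \<Rightarrow> real \<Rightarrow> gq" where
  "Xis l1 l2 l3 = gq_add (gq_add (gq_mult l1 l2 l3 gqC gqC) (gq_mult l1 l2 l3 gqC gqD))
                         (gq_mult l1 l2 l3 gqD gqD)"

end

theory Submission
  imports Defs "HOL-Analysis.Linear_Algebra"
begin

text \<open>The characteristic polynomial of the recurrence factors as
  t^3 - t^2 - t - 2 = (t - 2)(t^2 + t + 1), so a quaternion sequence obeying it is
  G n = c 2^n \<Theta> + W n with W 3-periodic and W 0 + W 1 + W 2 = 0 (W is \<open>JG_per\<close>, \<open>KG_per\<close>);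
  the cycle (W 0, W 1, W 2) is (-B, A + B, -A)/7 for J and (-D, C + D, -C) for K.
  Expanding G (n+1) G (n-1) - (G n)^2 by bilinearity alone, the \<Theta>^2 terms cancel, the mixed
  terms give the 2^n part, with Y m proportional to 2 W m - W (m+1), and for a zero-sum periodic
  W the remainder W (n+1) W (n-1) - (W n)^2 = -(W0^2 + W0 W2 + W2^2) does not depend on n.
  Non-commutativity enters only there: B A - A B = 14 \<Omega> and D C - C D = 6 \<Omega>.\<close>

text \<open>The product depends on \<open>\<lambda>\<^sub>1, \<lambda>\<^sub>2, \<lambda>\<^sub>3\<close>, so only the vector space structure
  becomes a type class instance; each \<^const>\<open>gq_mult\<close> is treated as a bilinear map.\<close>

instantiation gq :: real_vector
begin

definition "0 = GQ 0 0 0 0"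
definition "x + y = gq_add x y"
definition "- x = gq_scale (-1) x"
definition "x - y = gq_sub x y"
definition "scaleR = gq_scale"

instance
proof
  fix a b c :: gq and r s :: real
  show "a + b + c = a + (b + c)" "a + b = b + a" "0 + a = a" "- a + a = 0" "a - b = a + - b"
       "r *\<^sub>R (a + b) = r *\<^sub>R a + r *\<^sub>R b" "(r + s) *\<^sub>R a = r *\<^sub>R a + s *\<^sub>R a"
       "r *\<^sub>R s *\<^sub>R a = (r * s) *\<^sub>R a" "1 *\<^sub>R a = a"
    by (cases a; cases b; cases c; simp add: zero_gq_def plus_gq_def uminus_gq_def minus_gq_def
          scaleR_gq_def gq_sub_def algebra_simps)+
qed

end

lemma GQ_add [simp]: "GQ a0 a1 a2 a3 + GQ b0 b1 b2 b3 = GQ (a0+b0) (a1+b1) (a2+b2) (a3+b3)"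
  by (simp add: plus_gq_def)

lemma GQ_scaleR [simp]: "r *\<^sub>R GQ a0 a1 a2 a3 = GQ (r*a0) (r*a1) (r*a2) (r*a3)"
  by (simp add: scaleR_gq_def)

lemma GQ_uminus [simp]: "- GQ a0 a1 a2 a3 = GQ (-a0) (-a1) (-a2) (-a3)"
  by (simp add: uminus_gq_def)

lemma GQ_diff [simp]: "GQ a0 a1 a2 a3 - GQ b0 b1 b2 b3 = GQ (a0-b0) (a1-b1) (a2-b2) (a3-b3)"
  by (simp add: minus_gq_def gq_sub_def)

lemma gq_add_eq_plus: "gq_add = (+)"
  by (simp add: plus_gq_def fun_eq_iff)

lemma gq_scale_eq_scaleR: "gq_scale = scaleR"
  by (simp add: scaleR_gq_def fun_eq_iff)

lemma gq_sub_eq_minus: "gq_sub = (-)"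
  by (simp add: minus_gq_def fun_eq_iff)

lemma bilinear_gq_mult: "bilinear (gq_mult l1 l2 l3)"
proof -
  have "gq_mult l1 l2 l3 (x + y) z = gq_mult l1 l2 l3 x z + gq_mult l1 l2 l3 y z"
    "gq_mult l1 l2 l3 z (x + y) = gq_mult l1 l2 l3 z x + gq_mult l1 l2 l3 z y"
    "gq_mult l1 l2 l3 (r *\<^sub>R x) z = r *\<^sub>R gq_mult l1 l2 l3 x z"
    "gq_mult l1 l2 l3 z (r *\<^sub>R x) = r *\<^sub>R gq_mult l1 l2 l3 z x" for x y z r
    by (cases x; cases y; cases z; simp add: algebra_simps)+
  then show ?thesis
    by (simp add: bilinear_def linear_iff)
qed

lemma periodic3_eq_mod:
  fixes f :: "nat \<Rightarrow> 'a" and n :: nat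
  assumes "\<And>k. f (k + 3) = f k"
  shows "f n = f (n mod 3)"
proof -
  have "f (3 * q + r) = f r" for q r
  proof (induction q)
    case (Suc q)
    then show ?case using assms[of "3 * q + r"] by (simp add: add.commute add.left_commute)
  qed simp
  then show ?thesis
    by (metis div_mult_mod_eq mult.commute)
qed

lemma periodic3_eqI:
  fixes f g :: "nat \<Rightarrow> 'a"
  assumes "\<And>k. f (k + 3) = f k" "\<And>k. g (k + 3) = g k"
    and "f 0 = g 0" "f 1 = g 1" "f 2 = g 2"
  shows "f n = g n"
proof -
  have "n mod 3 = 0 \<or> n mod 3 = 1 \<or> n mod 3 = 2"
    by linarith
  then show ?thesis
    using assms periodic3_eq_mod[of f n] periodic3_eq_mod[of g n] by auto
qed

lemma jacobsthal3_rec_minus_geometric: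
  fixes x :: "nat \<Rightarrow> 'a::real_vector"
  assumes rec: "\<And>n. x (n + 3) = x (n + 2) + x (n + 1) + 2 *\<^sub>R x n"
    and sum: "x 0 + x 1 + x 2 = 7 *\<^sub>R a"
  defines "w \<equiv> \<lambda>n. x n - 2 ^ n *\<^sub>R a"
  shows "w (n + 3) = w n" and "w 0 + w 1 + w 2 = 0"
proof -
  have "(2 ^ (n + 3)) *\<^sub>R a = 2 ^ (n + 2) *\<^sub>R a + 2 ^ (n + 1) *\<^sub>R a + 2 *\<^sub>R 2 ^ n *\<^sub>R a" for n
  proof -
    have "(2::real) ^ (n + 3) = 2 ^ (n + 2) + 2 ^ (n + 1) + 2 * 2 ^ n" by (simp add: power_add)
    then show ?thesis by (simp flip: scaleR_add_left)
  qed
  then have w_rec: "w (n + 3) = w (n + 2) + w (n + 1) + 2 *\<^sub>R w n" for n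
    by (simp add: w_def rec algebra_simps)
  have "7 *\<^sub>R a = (1 + 2 + 4 :: real) *\<^sub>R a"
    by simp
  also have "\<dots> = a + 2 *\<^sub>R a + 4 *\<^sub>R a"
    by (simp only: scaleR_add_left scaleR_one)
  finally show sum0: "w 0 + w 1 + w 2 = 0"
    using sum by (simp add: w_def algebra_simps)
  have zero_sum: "w n + w (n + 1) + w (n + 2) = 0" for n
  proof (induction n)
    case (Suc n)
    have "w (n + 1) + w (n + 2) + w (n + 3) = 2 *\<^sub>R (w n + w (n + 1) + w (n + 2))"
      using w_rec[of n] by (simp add: algebra_simps scaleR_2)
    then show ?case using Suc by (simp add: add.assoc numeral_eq_Suc)
  qed (use sum0 in \<open>simp add: numeral_eq_Suc\<close>)
  have "w (n + 3) = (w n + w (n + 1) + w (n + 2)) + w n"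
    using w_rec[of n] by (simp add: algebra_simps scaleR_2)
  then show "w (n + 3) = w n"
    by (simp only: zero_sum add_0)
qed

lemma bilinear_cassini_geometric_plus:
  assumes f: "bilinear f" and G: "\<And>k. G k = (c * 2 ^ k) *\<^sub>R T + W k"
  shows "f (G (m + 2)) (G m) - f (G (m + 1)) (G (m + 1)) =
           (c * 2 ^ m) *\<^sub>R (2 *\<^sub>R f T (2 *\<^sub>R W m - W (m + 1)) - f (2 *\<^sub>R W (m + 1) - W (m + 2)) T)
           + (f (W (m + 2)) (W m) - f (W (m + 1)) (W (m + 1)))"
  by (simp add: G bilinear_ladd[OF f] bilinear_radd[OF f] bilinear_lmul[OF f] bilinear_rmul[OF f]
      bilinear_lsub[OF f] bilinear_rsub[OF f] power_add scaleR_diff_right scaleR_add_right mult_ac)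

lemma bilinear_cassini_periodic_zero_sum:
  fixes W :: "nat \<Rightarrow> 'a::real_vector"
  assumes f: "bilinear f" and per: "\<And>k. W (k + 3) = W k" and sum: "W 0 + W 1 + W 2 = 0"
  shows "f (W (m + 2)) (W m) - f (W (m + 1)) (W (m + 1)) =
           - (f (W 0) (W 0) + f (W 0) (W 2) + f (W 2) (W 2))"
proof -
  have W1: "W 1 = - (W 0 + W 2)"
    using sum by (simp add: algebra_simps eq_neg_iff_add_eq_0)
  have W3: "W 3 = W 0" and W4: "W 4 = W 1"
    using per[of 0] per[of 1] by simp_all
  note expand = bilinear_ladd[OF f] bilinear_radd[OF f] bilinear_lneg[OF f] bilinear_rneg[OF f]
    bilinear_lsub[OF f] bilinear_rsub[OF f]
  let ?Q = "- (f (W 0) (W 0) + f (W 0) (W 2) + f (W 2) (W 2))"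
  have "f (W 2) (W 0) - f (W 1) (W 1) = ?Q" "f (W 3) (W 1) - f (W 2) (W 2) = ?Q"
    "f (W 4) (W 2) - f (W 3) (W 3) = ?Q"
    unfolding W3 W4 W1 by (simp_all add: expand algebra_simps)
  then have "f (W (k + 2)) (W k) - f (W (k + 1)) (W (k + 1)) = ?Q" if "k < 3" for k
    using that by (auto simp: less_Suc_eq numeral_eq_Suc)
  moreover have "W (m + j) = W (m mod 3 + j)" for j
    using periodic3_eq_mod[of W, OF per] by (metis mod_add_left_eq)
  ultimately show ?thesis
    by (metis add_0_right mod_less_divisor zero_less_numeral)
qed

lemma J3_recurrence: "J3 (n + 3) = J3 (n + 2) + J3 (n + 1) + 2 * J3 n"
  by (simp add: numeral_eq_Suc)

lemma K3_recurrence: "K3 (n + 3) = K3 (n + 2) + K3 (n + 1) + 2 * K3 n"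
  by (simp add: numeral_eq_Suc)

lemma JG_recurrence: "JG (n + 3) = JG (n + 2) + JG (n + 1) + 2 *\<^sub>R JG n"
  using J3_recurrence[of n] J3_recurrence[of "n + 1"] J3_recurrence[of "n + 2"]
    J3_recurrence[of "n + 3"]
  by (simp add: JG_def add.assoc)

lemma KG_recurrence: "KG (n + 3) = KG (n + 2) + KG (n + 1) + 2 *\<^sub>R KG n"
  using K3_recurrence[of n] K3_recurrence[of "n + 1"] K3_recurrence[of "n + 2"]
    K3_recurrence[of "n + 3"]
  by (simp add: KG_def add.assoc)

lemma JG_initial_sum: "JG 0 + JG 1 + JG 2 = 7 *\<^sub>R (2/7) *\<^sub>R Theta"
  by (simp add: JG_def Theta_def eval_nat_numeral)

lemma KG_initial_sum: "KG 0 + KG 1 + KG 2 = 7 *\<^sub>R Theta"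
  by (simp add: KG_def Theta_def eval_nat_numeral)

definition JG_per :: "nat \<Rightarrow> gq" where
  "JG_per n = JG n - 2 ^ n *\<^sub>R (2/7) *\<^sub>R Theta"

definition KG_per :: "nat \<Rightarrow> gq" where
  "KG_per n = KG n - 2 ^ n *\<^sub>R Theta"

lemma JG_per_shift3: "JG_per (n + 3) = JG_per n"
  and JG_per_zero_sum: "JG_per 0 + JG_per 1 + JG_per 2 = 0"
  using jacobsthal3_rec_minus_geometric[OF JG_recurrence JG_initial_sum]
  by (simp_all add: JG_per_def)

lemma KG_per_shift3: "KG_per (n + 3) = KG_per n"
  and KG_per_zero_sum: "KG_per 0 + KG_per 1 + KG_per 2 = 0"
  using jacobsthal3_rec_minus_geometric[OF KG_recurrence KG_initial_sum]
  by (simp_all add: KG_per_def)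

lemma JG_per_0: "JG_per 0 = - (1/7) *\<^sub>R gqB" and JG_per_2: "JG_per 2 = - (1/7) *\<^sub>R gqA"
  by (simp_all add: JG_per_def JG_def Theta_def gqA_def gqB_def eval_nat_numeral)

lemma JG_per_1: "JG_per 1 = (1/7) *\<^sub>R (gqA + gqB)"
  using JG_per_zero_sum by (simp add: JG_per_0 JG_per_2 algebra_simps eq_neg_iff_add_eq_0)

lemma KG_per_0: "KG_per 0 = - gqD" and KG_per_2: "KG_per 2 = - gqC"
  by (simp_all add: KG_per_def KG_def Theta_def gqC_def gqD_def eval_nat_numeral)

lemma KG_per_1: "KG_per 1 = gqC + gqD"
  using KG_per_zero_sum by (simp add: KG_per_0 KG_per_2 algebra_simps eq_neg_iff_add_eq_0)

lemma commutator_gqB_gqA: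
  "gq_mult l1 l2 l3 gqB gqA - gq_mult l1 l2 l3 gqA gqB = 14 *\<^sub>R Omega l1 l2 l3"
  by (simp add: gqA_def gqB_def Omega_def)

lemma commutator_gqD_gqC:
  "gq_mult l1 l2 l3 gqD gqC - gq_mult l1 l2 l3 gqC gqD = 6 *\<^sub>R Omega l1 l2 l3"
  by (simp add: gqC_def gqD_def Omega_def)

lemma Xs_shift3: "Xs (n + 3) = Xs n"
  by (simp add: Xs_def)

lemma Y1_shift3: "Y1 (n + 3) = Y1 n" and Y1s_shift3: "Y1s (n + 3) = Y1s n"
proof -
  have "Xs (n + 3 + 1) = Xs (n + 1)"
    using Xs_shift3[of "n + 1"] by (simp add: ac_simps)
  then show "Y1 (n + 3) = Y1 n" "Y1s (n + 3) = Y1s n"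
    by (simp_all add: Y1_def Y1s_def Xs_shift3)
qed

lemma Y1_eq_JG_per: "Y1 m = 7 *\<^sub>R (2 *\<^sub>R JG_per m - JG_per (m + 1))"
proof (rule periodic3_eqI[of Y1])
  show "7 *\<^sub>R (2 *\<^sub>R JG_per (k + 3) - JG_per (k + 3 + 1)) = 7 *\<^sub>R (2 *\<^sub>R JG_per k - JG_per (k + 1))"
    for k
    using JG_per_shift3[of k] JG_per_shift3[of "k + 1"] by (simp add: ac_simps)
  have "Y1 0 = 7 *\<^sub>R (2 *\<^sub>R JG_per 0 - JG_per 1)" "Y1 1 = 7 *\<^sub>R (2 *\<^sub>R JG_per 1 - JG_per 2)"
    "Y1 2 = 7 *\<^sub>R (2 *\<^sub>R JG_per 2 - JG_per 3)"
    using JG_per_shift3[of 0] unfolding Y1_def JG_per_1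
    by (simp_all add: Xs_def gq_sub_eq_minus gq_add_eq_plus gq_scale_eq_scaleR JG_per_0 JG_per_2
        gqA_def gqB_def)
  \<comment> \<open>plain \<open>simp\<close> would turn \<open>k + 1\<close> into \<open>Suc k\<close> and miss the equations above\<close>
  moreover have "(0::nat) + 1 = 1" "(1::nat) + 1 = 2" "(2::nat) + 1 = 3"
    by simp_all
  ultimately show "Y1 0 = 7 *\<^sub>R (2 *\<^sub>R JG_per 0 - JG_per (0 + 1))"
    "Y1 1 = 7 *\<^sub>R (2 *\<^sub>R JG_per 1 - JG_per (1 + 1))"
    "Y1 2 = 7 *\<^sub>R (2 *\<^sub>R JG_per 2 - JG_per (2 + 1))"
    by (simp_all only:)
qed (rule Y1_shift3)

lemma Y1s_eq_KG_per: "Y1s m = 2 *\<^sub>R KG_per m - KG_per (m + 1)"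
proof (rule periodic3_eqI[of Y1s])
  show "2 *\<^sub>R KG_per (k + 3) - KG_per (k + 3 + 1) = 2 *\<^sub>R KG_per k - KG_per (k + 1)" for k
    using KG_per_shift3[of k] KG_per_shift3[of "k + 1"] by (simp add: ac_simps)
  have "Y1s 0 = 2 *\<^sub>R KG_per 0 - KG_per 1" "Y1s 1 = 2 *\<^sub>R KG_per 1 - KG_per 2"
    "Y1s 2 = 2 *\<^sub>R KG_per 2 - KG_per 3"
    using KG_per_shift3[of 0] unfolding Y1s_def KG_per_1
    by (simp_all add: Xs_def gq_sub_eq_minus gq_add_eq_plus gq_scale_eq_scaleR KG_per_0 KG_per_2
        gqC_def gqD_def)
  moreover have "(0::nat) + 1 = 1" "(1::nat) + 1 = 2" "(2::nat) + 1 = 3"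
    by simp_all
  ultimately show "Y1s 0 = 2 *\<^sub>R KG_per 0 - KG_per (0 + 1)"
    "Y1s 1 = 2 *\<^sub>R KG_per 1 - KG_per (1 + 1)" "Y1s 2 = 2 *\<^sub>R KG_per 2 - KG_per (2 + 1)"
    by (simp_all only:)
qed (rule Y1s_shift3)

lemma JG_cassini:
  "gq_mult l1 l2 l3 (JG (m + 2)) (JG m) - gq_mult l1 l2 l3 (JG (m + 1)) (JG (m + 1)) =
     (1/49) *\<^sub>R (2 ^ (m + 1) *\<^sub>R (2 *\<^sub>R gq_mult l1 l2 l3 Theta (Y1 m) - gq_mult l1 l2 l3 (Y1 (m + 1)) Theta)
       - (Xi l1 l2 l3 + 14 *\<^sub>R Omega l1 l2 l3))"
proof -
  let ?f = "gq_mult l1 l2 l3"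
  have f: "bilinear ?f"
    by (rule bilinear_gq_mult)
  have G: "JG k = (2/7 * 2 ^ k) *\<^sub>R Theta + JG_per k" for k
    by (simp add: JG_per_def)
  have P: "2 *\<^sub>R JG_per k - JG_per (k + 1) = (1/7) *\<^sub>R Y1 k" for k
    by (simp add: Y1_eq_JG_per)
  have Q: "?f (JG_per 0) (JG_per 0) + ?f (JG_per 0) (JG_per 2) + ?f (JG_per 2) (JG_per 2) =
      (1/49) *\<^sub>R (Xi l1 l2 l3 + 14 *\<^sub>R Omega l1 l2 l3)"
    unfolding JG_per_0 JG_per_2 Xi_def gq_add_eq_plus commutator_gqB_gqA[symmetric]
    by (simp add: bilinear_lmul[OF f] bilinear_rmul[OF f] bilinear_lneg[OF f] bilinear_rneg[OF f]
        algebra_simps)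
  show ?thesis
    using P[of m] P[of "m + 1"]
    unfolding bilinear_cassini_geometric_plus[OF f G] Q
      bilinear_cassini_periodic_zero_sum[OF f JG_per_shift3 JG_per_zero_sum]
    by (simp add: bilinear_lmul[OF f] bilinear_rmul[OF f] algebra_simps)
qed

lemma KG_cassini:
  "gq_mult l1 l2 l3 (KG (m + 2)) (KG m) - gq_mult l1 l2 l3 (KG (m + 1)) (KG (m + 1)) =
     2 ^ m *\<^sub>R (2 *\<^sub>R gq_mult l1 l2 l3 Theta (Y1s m) - gq_mult l1 l2 l3 (Y1s (m + 1)) Theta)
       - (Xis l1 l2 l3 + 6 *\<^sub>R Omega l1 l2 l3)"
proof -
  let ?f = "gq_mult l1 l2 l3"
  have f: "bilinear ?f"
    by (rule bilinear_gq_mult)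
  have G: "KG k = (1 * 2 ^ k) *\<^sub>R Theta + KG_per k" for k
    by (simp add: KG_per_def)
  have Q: "?f (KG_per 0) (KG_per 0) + ?f (KG_per 0) (KG_per 2) + ?f (KG_per 2) (KG_per 2) =
      Xis l1 l2 l3 + 6 *\<^sub>R Omega l1 l2 l3"
    unfolding KG_per_0 KG_per_2 Xis_def gq_add_eq_plus commutator_gqD_gqC[symmetric]
    by (simp add: bilinear_lneg[OF f] bilinear_rneg[OF f] algebra_simps)
  show ?thesis
    unfolding bilinear_cassini_geometric_plus[OF f G] Q
      bilinear_cassini_periodic_zero_sum[OF f KG_per_shift3 KG_per_zero_sum]
    by (simp add: Y1s_eq_KG_per algebra_simps)
qed

theorem corollary3p3:
  fixes l1 l2 l3 :: real and n :: nat
  assumes "n \<ge> 1"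
  shows "gq_sub (gq_mult l1 l2 l3 (JG (n+1)) (JG (n-1))) (gq_mult l1 l2 l3 (JG n) (JG n)) =
           gq_scale (1/49)
             (gq_sub (gq_scale (2^n) (gq_sub (gq_scale 2 (gq_mult l1 l2 l3 Theta (Y1 (n-1))))
                                             (gq_mult l1 l2 l3 (Y1 n) Theta)))
                     (gq_add (Xi l1 l2 l3) (gq_scale 14 (Omega l1 l2 l3))))
       \<and> gq_sub (gq_mult l1 l2 l3 (KG (n+1)) (KG (n-1))) (gq_mult l1 l2 l3 (KG n) (KG n)) =
           gq_sub (gq_scale (2^(n-1)) (gq_sub (gq_scale 2 (gq_mult l1 l2 l3 Theta (Y1s (n-1))))
                                              (gq_mult l1 l2 l3 (Y1s n) Theta)))
                  (gq_add (Xis l1 l2 l3) (gq_scale 6 (Omega l1 l2 l3)))"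
proof -
  obtain m where n: "n = m + 1"
    using assms by (metis add.commute le_add_diff_inverse)
  show ?thesis
    using JG_cassini[of l1 l2 l3 m] KG_cassini[of l1 l2 l3 m]
    unfolding n gq_add_eq_plus gq_scale_eq_scaleR gq_sub_eq_minus
    by (simp add: ac_simps)
qed

end
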